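(* Let $\otimes$ and $\oplus$ be uninorms on $[0,1]$ and let $\neg$ be a strong negation function. Then $(\otimes,\oplus)$ satisfies the rearrangement inequality if and only if $(\Phi^{\neg}(\oplus),\Phi^{\neg}(\otimes))$ satisfies the dual rearrangement inequality.
   Context: A uninorm is a function $\otimes:[0,1]^2\to[0,1]$ that is commutative, associative, monotonic (for all $x,y,z\in[0,1]$, $x\leq y$ implies $x\otimes z\leq y\otimes z$), and has an identity element $e\in[0,1]$ ($x\otimes e=x$ for all $x$). A negation is a monotonically nonincreasing function $\neg:[0,1]\to[0,1]$ with $\neg(0)=1$, $\neg(1)=0$; it is strong if it is strictly monotone and involutive ($\neg\neg x=x$ for all $x$). For a function $f:[0,1]^2\to[0,1]$, its dual is $\Phi^{\neg}(f)(x,y)=\neg(f(\neg x,\neg y))$. For uninorms $\otimes,\oplus$, the pair $(\otimes,\oplus)$ satisfies the rearrangement inequality if for every $n\geq1$, all $0\leq x_1\leq\cdots\leq x_n\leq 1$, $0\leq y_1\leq\cdots\leq y_n\leq 1$ and every permutation $\sigma$ of $\{1,\dots,n\}$, $$(x_n\otimes y_1)\oplus\cdots\oplus(x_1\otimes y_n)\leq (x_{\sigma(1)}\otimes y_1)\oplus\cdots\oplus(x_{\sigma(n)}\otimes y_n)\leq (x_1\otimes y_1)\oplus\cdots\oplus(x_n\otimes y_n),$$ and satisfies the dual rearrangement inequality if for all such data $$(x_n\oplus y_1)\otimes\cdots\otimes(x_1\oplus y_n)\geq (x_{\sigma(1)}\oplus y_1)\otimes\cdots\otimes(x_{\sigma(n)}\oplus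 y_n)\geq (x_1\oplus y_1)\otimes\cdots\otimes(x_n\oplus y_n).$$ (For a pair $(\otimes,\oplus)$ the first component plays the role of $\otimes$ and the second the role of $\oplus$ in these definitions.) *)

theory Defs
  imports "HOL-Analysis.Analysis" "HOL-Combinatorics.Permutations"
begin

definition uninorm :: "(real \<Rightarrow> real \<Rightarrow> real) \<Rightarrow> bool" where
  "uninorm f \<longleftrightarrow>
     (\<forall>x\<in>{0..1}. \<forall>y\<in>{0..1}. f x y \<in> {0..1}) \<and>
     (\<forall>x\<in>{0..1}. \<forall>y\<in>{0..1}. f x y = f y x) \<and>
     (\<forall>x\<in>{0..1}. \<forall>y\<in>{0..1}. \<forall>z\<in>{0..1}. f (f x y) z = f x (f y z)) \<and>
     (\<forall>x\<in>{0..1}. \<forall>y\<in>{0..1}. \<forall>z\<in>{0..1}. x \<le> y \<longrightarrow> f x z \<le> f y z) \<and>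
     (\<exists>e\<in>{0..1}. \<forall>x\<in>{0..1}. f x e = x)"

definition negation :: "(real \<Rightarrow> real) \<Rightarrow> bool" where
  "negation n \<longleftrightarrow> (\<forall>x\<in>{0..1}. n x \<in> {0..1}) \<and>
     (\<forall>x\<in>{0..1}. \<forall>y\<in>{0..1}. x \<le> y \<longrightarrow> n y \<le> n x) \<and> n 0 = 1 \<and> n 1 = 0"

definition strong_negation :: "(real \<Rightarrow> real) \<Rightarrow> bool" where
  "strong_negation n \<longleftrightarrow> negation n \<and>
     (\<forall>x\<in>{0..1}. \<forall>y\<in>{0..1}. x < y \<longrightarrow> n y < n x) \<and>
     (\<forall>x\<in>{0..1}. n (n x) = x)"

definition dual :: "(real \<Rightarrow> real) \<Rightarrow> (real \<Rightarrow> real \<Rightarrow> real) \<Rightarrow> (real \<Rightarrow> real \<Rightarrow> real)" where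
  "dual n f = (\<lambda>x y. n (f (n x) (n y)))"

text \<open>iter f z n = z 0 (f) z 1 (f) ... (f) z (n-1), left-associated; meant for n \<ge> 1.\<close>
fun iter :: "(real \<Rightarrow> real \<Rightarrow> real) \<Rightarrow> (nat \<Rightarrow> real) \<Rightarrow> nat \<Rightarrow> real" where
  "iter f z 0 = z 0"
| "iter f z (Suc 0) = z 0"
| "iter f z (Suc (Suc k)) = f (iter f z (Suc k)) (z (Suc k))"

text \<open>Sequences are indexed 0..n-1 (instead of 1..n); sorted means nondecreasing in [0,1].\<close>
definition sorted01 :: "nat \<Rightarrow> (nat \<Rightarrow> real) \<Rightarrow> bool" where
  "sorted01 n x \<longleftrightarrow> (\<forall>i<n. 0 \<le> x i \<and> x i \<le> 1) \<and> (\<forall>i j. i \<le> j \<and> j < n \<longrightarrow> x i \<le> x j)"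

definition rearrangement_ineq :: "(real \<Rightarrow> real \<Rightarrow> real) \<Rightarrow> (real \<Rightarrow> real \<Rightarrow> real) \<Rightarrow> bool" where
  "rearrangement_ineq T S \<longleftrightarrow>
     (\<forall>n\<ge>1. \<forall>x y \<sigma>. sorted01 n x \<and> sorted01 n y \<and> \<sigma> permutes {..<n} \<longrightarrow>
        iter S (\<lambda>i. T (x (n - 1 - i)) (y i)) n \<le> iter S (\<lambda>i. T (x (\<sigma> i)) (y i)) n \<and>
        iter S (\<lambda>i. T (x (\<sigma> i)) (y i)) n \<le> iter S (\<lambda>i. T (x i) (y i)) n)"

definition dual_rearrangement_ineq :: "(real \<Rightarrow> real \<Rightarrow> real) \<Rightarrow> (real \<Rightarrow> real \<Rightarrow> real) \<Rightarrow> bool" where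
  "dual_rearrangement_ineq T S \<longleftrightarrow>
     (\<forall>n\<ge>1. \<forall>x y \<sigma>. sorted01 n x \<and> sorted01 n y \<and> \<sigma> permutes {..<n} \<longrightarrow>
        iter T (\<lambda>i. S (x (n - 1 - i)) (y i)) n \<ge> iter T (\<lambda>i. S (x (\<sigma> i)) (y i)) n \<and>
        iter T (\<lambda>i. S (x (\<sigma> i)) (y i)) n \<ge> iter T (\<lambda>i. S (x i) (y i)) n)"

end

theory Submission
  imports Defs
begin

text \<open>For a strong negation \<open>N\<close>, an iterated dual product is \<open>N\<close> of the iterated product of the
  negated factors. Hence the dual rearranged sum for \<open>(x, y, \<sigma>)\<close> equals \<open>N\<close> of the ordinary
  rearranged sum for the reflected data \<open>x' i = N (x (n - 1 - i))\<close>, \<open>y' i = N (y (n - 1 - i))\<close>,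
  \<open>\<sigma>' = \<rho> \<circ> \<sigma> \<circ> \<rho>\<close> with \<open>\<rho>\<close> the index reversal, once the order of the iterated \<open>S\<close>-product is
  reversed by commutativity and associativity. Conjugation by \<open>\<rho>\<close> fixes the identity and the
  reversal, reflection keeps sequences sorted and is an involution on admissible data, and \<open>N\<close>
  is strictly antitone; so the two chains of inequalities correspond instance by instance.\<close>

lemma iter_cong:
  "(\<And>i. i < Suc k \<Longrightarrow> z i = w i) \<Longrightarrow> iter S z (Suc k) = iter S w (Suc k)"
  by (induction k) auto

lemma iter_closed:
  assumes "\<And>a b. a \<in> A \<Longrightarrow> b \<in> A \<Longrightarrow> S a b \<in> A" and "\<And>i. i < Suc k \<Longrightarrow> z i \<in> A"
  shows "iter S z (Suc k) \<in> A"
  using assms(2) by (induction k) (auto intro: assms(1))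

locale comm_semigroup_on =
  fixes S :: "real \<Rightarrow> real \<Rightarrow> real" and A :: "real set"
  assumes closed: "\<And>a b. a \<in> A \<Longrightarrow> b \<in> A \<Longrightarrow> S a b \<in> A"
    and commute: "\<And>a b. a \<in> A \<Longrightarrow> b \<in> A \<Longrightarrow> S a b = S b a"
    and assoc: "\<And>a b c. a \<in> A \<Longrightarrow> b \<in> A \<Longrightarrow> c \<in> A \<Longrightarrow> S (S a b) c = S a (S b c)"
begin

lemma iter_Suc_Suc_left:
  assumes "\<And>i. i < Suc (Suc k) \<Longrightarrow> z i \<in> A"
  shows "iter S z (Suc (Suc k)) = S (z 0) (iter S (\<lambda>i. z (Suc i)) (Suc k))"
  using assms
proof (induction k)
  case 0
  then show ?case by simp
next
  case (Suc k)
  have "iter S (\<lambda>i. z (Suc i)) (Suc k) \<in> A"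
    using Suc.prems by (intro iter_closed[OF closed]) auto
  have "iter S z (Suc (Suc (Suc k))) = S (iter S z (Suc (Suc k))) (z (Suc (Suc k)))"
    by simp
  also have "\<dots> = S (S (z 0) (iter S (\<lambda>i. z (Suc i)) (Suc k))) (z (Suc (Suc k)))"
    using Suc by simp
  also have "\<dots> = S (z 0) (S (iter S (\<lambda>i. z (Suc i)) (Suc k)) (z (Suc (Suc k))))"
    using Suc.prems \<open>iter S (\<lambda>i. z (Suc i)) (Suc k) \<in> A\<close> by (intro assoc) auto
  also have "\<dots> = S (z 0) (iter S (\<lambda>i. z (Suc i)) (Suc (Suc k)))"
    by simp
  finally show ?case .
qed

lemma iter_reverse:
  assumes "\<And>i. i < Suc k \<Longrightarrow> z i \<in> A"
  shows "iter S (\<lambda>i. z (k - i)) (Suc k) = iter S z (Suc k)"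
  using assms
proof (induction k arbitrary: z)
  case 0
  then show ?case by simp
next
  case (Suc k)
  have "iter S (\<lambda>i. z (Suc k - i)) (Suc k) = iter S (\<lambda>i. z (Suc (k - i))) (Suc k)"
    by (rule iter_cong) (simp add: Suc_diff_le)
  also have "\<dots> = iter S (\<lambda>i. z (Suc i)) (Suc k)"
    using Suc.prems by (intro Suc.IH) auto
  finally have "iter S (\<lambda>i. z (Suc k - i)) (Suc (Suc k)) = S (iter S (\<lambda>i. z (Suc i)) (Suc k)) (z 0)"
    by simp
  also have "\<dots> = S (z 0) (iter S (\<lambda>i. z (Suc i)) (Suc k))"
    using Suc.prems by (intro commute iter_closed[OF closed]) auto
  also have "\<dots> = iter S z (Suc (Suc k))"
    using Suc.prems by (intro iter_Suc_Suc_left[symmetric])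
  finally show ?case .
qed

end

lemma uninorm_comm_semigroup_on: "uninorm f \<Longrightarrow> comm_semigroup_on f {0..1}"
  unfolding uninorm_def comm_semigroup_on_def by blast

lemma uninorm_closed: "uninorm f \<Longrightarrow> a \<in> {0..1} \<Longrightarrow> b \<in> {0..1} \<Longrightarrow> f a b \<in> {0..1}"
  unfolding uninorm_def by blast

lemma strong_negation_le_iff:
  assumes "strong_negation N" and "a \<in> {0..1}" and "b \<in> {0..1}"
  shows "N a \<le> N b \<longleftrightarrow> b \<le> a"
  using assms unfolding strong_negation_def negation_def by (meson linorder_not_le)

lemma dual_apply: "dual N f a b = N (f (N a) (N b))"
  by (simp add: dual_def)

lemma iter_dual:
  assumes "strong_negation N" and "\<And>a b. a \<in> {0..1} \<Longrightarrow> b \<in> {0..1} \<Longrightarrow> S a b \<in> {0..1}"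
    and "\<And>i. i < Suc k \<Longrightarrow> z i \<in> {0..1}"
  shows "iter (dual N S) z (Suc k) = N (iter S (\<lambda>i. N (z i)) (Suc k))"
  using assms(3)
proof (induction k)
  case 0
  then show ?case using assms(1) by (simp add: strong_negation_def)
next
  case (Suc k)
  have "iter S (\<lambda>i. N (z i)) (Suc k) \<in> {0..1}"
    using Suc.prems assms(1) by (intro iter_closed[OF assms(2)]) (auto simp: strong_negation_def negation_def)
  then show ?case
    using Suc assms(1) by (simp add: dual_apply strong_negation_def)
qed

text \<open>Outside \<open>{..<n}\<close> both reflections leave their argument unchanged, which makes them
  involutions on whole sequences and not only on their first \<open>n\<close> terms.\<close>

definition reflect_index :: "nat \<Rightarrow> nat \<Rightarrow> nat" where
  "reflect_index n i = (if i < n then n - 1 - i else i)"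

definition reflect_seq :: "(real \<Rightarrow> real) \<Rightarrow> nat \<Rightarrow> (nat \<Rightarrow> real) \<Rightarrow> nat \<Rightarrow> real" where
  "reflect_seq N n x i = (if i < n then N (x (n - 1 - i)) else x i)"

lemma reflect_index_reflect_index [simp]: "reflect_index n (reflect_index n i) = i"
  by (simp add: reflect_index_def)

lemma reflect_index_permutes: "reflect_index n permutes {..<n}"
  by (rule inj_imp_permutes) (auto simp: reflect_index_def inj_on_def)

lemma permutes_reflect_index_conj:
  "\<sigma> permutes {..<n} \<Longrightarrow> reflect_index n \<circ> \<sigma> \<circ> reflect_index n permutes {..<n}"
  by (intro permutes_compose reflect_index_permutes)

lemma reflect_index_conj_involutive: "reflect_index n \<circ> (reflect_index n \<circ> \<sigma> \<circ> reflect_index n) \<circ> reflect_index n = \<sigma>"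
  by (simp add: fun_eq_iff)

lemma sorted01_reflect_seq:
  assumes "negation N" and "sorted01 n x"
  shows "sorted01 n (reflect_seq N n x)"
  using assms unfolding sorted01_def negation_def reflect_seq_def by auto

lemma reflect_seq_reflect_seq:
  assumes "strong_negation N" and "sorted01 n x"
  shows "reflect_seq N n (reflect_seq N n x) = x"
  using assms unfolding sorted01_def strong_negation_def reflect_seq_def by (auto simp: fun_eq_iff)

lemma iter_dual_rearranged:
  assumes "uninorm T" and "uninorm S" and N: "strong_negation N"
    and x: "\<And>i. i < Suc k \<Longrightarrow> x i \<in> {0..1}" and y: "\<And>i. i < Suc k \<Longrightarrow> y i \<in> {0..1}"
    and p: "\<And>i. i < Suc k \<Longrightarrow> p i < Suc k" and q: "\<And>i. i < Suc k \<Longrightarrow> q i = k - p (k - i)"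
  shows "iter (dual N S) (\<lambda>i. dual N T (x (p i)) (y i)) (Suc k)
       = N (iter S (\<lambda>i. T (reflect_seq N (Suc k) x (q i)) (reflect_seq N (Suc k) y i)) (Suc k))"
proof -
  have N_range: "\<And>a. a \<in> {0..1} \<Longrightarrow> N a \<in> {0..1}" and N_N: "\<And>a. a \<in> {0..1} \<Longrightarrow> N (N a) = a"
    using N unfolding strong_negation_def negation_def by auto
  have S_closed: "S a b \<in> {0..1}" if "a \<in> {0..1}" and "b \<in> {0..1}" for a b
    using \<open>uninorm S\<close> that by (rule uninorm_closed)
  have T_range: "T (N (x (p i))) (N (y i)) \<in> {0..1}" if "i < Suc k" for i
    using that x y p by (blast intro: uninorm_closed[OF \<open>uninorm T\<close>] N_range)
  let ?w = "\<lambda>i. T (reflect_seq N (Suc k) x (q i)) (reflect_seq N (Suc k) y i)"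
  have dual_T_range: "dual N T (x (p i)) (y i) \<in> {0..1}" if "i < Suc k" for i
    unfolding dual_apply using that by (blast intro: N_range T_range)
  have "iter (dual N S) (\<lambda>i. dual N T (x (p i)) (y i)) (Suc k)
      = N (iter S (\<lambda>i. N (dual N T (x (p i)) (y i))) (Suc k))"
    by (rule iter_dual[OF N S_closed dual_T_range])
  also have "iter S (\<lambda>i. N (dual N T (x (p i)) (y i))) (Suc k) = iter S (\<lambda>i. ?w (k - i)) (Suc k)"
  proof (rule iter_cong)
    fix i assume i: "i < Suc k"
    then have "q (k - i) = k - p i" and "k - (k - p i) = p i" and "k - (k - i) = i"
      and "k - p i < Suc k" and "k - i < Suc k"
      using p[OF i] q[of "k - i"] by auto
    then show "N (dual N T (x (p i)) (y i)) = ?w (k - i)"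
      using T_range[OF i] by (simp add: dual_apply reflect_seq_def N_N)
  qed
  also have "\<dots> = iter S ?w (Suc k)"
    using x y q by (intro comm_semigroup_on.iter_reverse[OF uninorm_comm_semigroup_on[OF \<open>uninorm S\<close>]])
      (auto simp: reflect_seq_def simp del: atLeastAtMost_iff intro!: uninorm_closed[OF \<open>uninorm T\<close>] N_range)
  finally show ?thesis .
qed

definition rearrangement_chain ::
    "(real \<Rightarrow> real \<Rightarrow> real) \<Rightarrow> (real \<Rightarrow> real \<Rightarrow> real) \<Rightarrow> nat \<Rightarrow> (nat \<Rightarrow> real) \<Rightarrow> (nat \<Rightarrow> real) \<Rightarrow> (nat \<Rightarrow> nat) \<Rightarrow> bool"
  where "rearrangement_chain T S n x y \<sigma> \<longleftrightarrow>
    iter S (\<lambda>i. T (x (n - 1 - i)) (y i)) n \<le> iter S (\<lambda>i. T (x (\<sigma> i)) (y i)) n \<and>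
    iter S (\<lambda>i. T (x (\<sigma> i)) (y i)) n \<le> iter S (\<lambda>i. T (x i) (y i)) n"

definition dual_rearrangement_chain ::
    "(real \<Rightarrow> real \<Rightarrow> real) \<Rightarrow> (real \<Rightarrow> real \<Rightarrow> real) \<Rightarrow> nat \<Rightarrow> (nat \<Rightarrow> real) \<Rightarrow> (nat \<Rightarrow> real) \<Rightarrow> (nat \<Rightarrow> nat) \<Rightarrow> bool"
  where "dual_rearrangement_chain T S n x y \<sigma> \<longleftrightarrow>
    iter T (\<lambda>i. S (x (n - 1 - i)) (y i)) n \<ge> iter T (\<lambda>i. S (x (\<sigma> i)) (y i)) n \<and>
    iter T (\<lambda>i. S (x (\<sigma> i)) (y i)) n \<ge> iter T (\<lambda>i. S (x i) (y i)) n"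

lemma rearrangement_ineq_iff_chain:
  "rearrangement_ineq T S \<longleftrightarrow> (\<forall>n\<ge>1. \<forall>x y \<sigma>. sorted01 n x \<and> sorted01 n y \<and> \<sigma> permutes {..<n}
     \<longrightarrow> rearrangement_chain T S n x y \<sigma>)"
  unfolding rearrangement_ineq_def rearrangement_chain_def ..

lemma dual_rearrangement_ineq_iff_chain:
  "dual_rearrangement_ineq T S \<longleftrightarrow> (\<forall>n\<ge>1. \<forall>x y \<sigma>. sorted01 n x \<and> sorted01 n y \<and> \<sigma> permutes {..<n}
     \<longrightarrow> dual_rearrangement_chain T S n x y \<sigma>)"
  unfolding dual_rearrangement_ineq_def dual_rearrangement_chain_def ..

lemma dual_rearrangement_chain_iff_reflected:
  assumes "uninorm T" and "uninorm S" and N: "strong_negation N"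
    and "sorted01 n x" and "sorted01 n y" and \<sigma>: "\<sigma> permutes {..<n}" and "1 \<le> n"
  shows "dual_rearrangement_chain (dual N S) (dual N T) n x y \<sigma> \<longleftrightarrow>
    rearrangement_chain T S n (reflect_seq N n x) (reflect_seq N n y) (reflect_index n \<circ> \<sigma> \<circ> reflect_index n)"
proof -
  obtain k where n: "n = Suc k"
    using \<open>1 \<le> n\<close> by (cases n) auto
  define x' y' \<sigma>' where "x' = reflect_seq N n x" and "y' = reflect_seq N n y"
    and "\<sigma>' = reflect_index n \<circ> \<sigma> \<circ> reflect_index n"
  have x: "x i \<in> {0..1}" and y: "y i \<in> {0..1}" if "i < n" for i
    using that \<open>sorted01 n x\<close> \<open>sorted01 n y\<close> unfolding sorted01_def by auto
  have \<sigma>_lt: "\<sigma> i < n" if "i < n" for i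
    using that permutes_in_image[OF \<sigma>] by simp
  have "sorted01 n x'" "sorted01 n y'"
    using N \<open>sorted01 n x\<close> \<open>sorted01 n y\<close> unfolding x'_def y'_def strong_negation_def
    by (auto intro: sorted01_reflect_seq)
  then have x': "x' i \<in> {0..1}" and y': "y' i \<in> {0..1}" if "i < n" for i
    using that unfolding sorted01_def by auto
  have "\<sigma>' permutes {..<n}"
    unfolding \<sigma>'_def using \<sigma> by (rule permutes_reflect_index_conj)
  then have \<sigma>'_lt: "\<sigma>' i < n" if "i < n" for i
    using that permutes_in_image by fastforce
  let ?P = "\<lambda>p. iter S (\<lambda>i. T (x' (p i)) (y' i)) n"
  have P_range: "?P p \<in> {0..1}" if "\<And>i. i < n \<Longrightarrow> p i < n" for p
    unfolding n using that x' y'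
    by (intro iter_closed[where A = "{0..1}"] uninorm_closed[OF \<open>uninorm S\<close>] uninorm_closed[OF \<open>uninorm T\<close>])
      (auto simp: n simp del: atLeastAtMost_iff)
  have reversed: "iter (dual N S) (\<lambda>i. dual N T (x (n - 1 - i)) (y i)) n = N (?P (\<lambda>i. n - 1 - i))"
    unfolding n x'_def y'_def by (rule iter_dual_rearranged) (use assms x y n in auto)
  have permuted: "iter (dual N S) (\<lambda>i. dual N T (x (\<sigma> i)) (y i)) n = N (?P \<sigma>')"
    unfolding n x'_def y'_def \<sigma>'_def
    by (rule iter_dual_rearranged) (use assms x y n \<sigma>_lt in \<open>auto simp: reflect_index_def\<close>)
  have sorted: "iter (dual N S) (\<lambda>i. dual N T (x i) (y i)) n = N (?P (\<lambda>i. i))"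
    unfolding n x'_def y'_def by (rule iter_dual_rearranged) (use assms x y n in auto)
  show ?thesis
    unfolding dual_rearrangement_chain_def rearrangement_chain_def reversed permuted sorted
      x'_def[symmetric] y'_def[symmetric] \<sigma>'_def[symmetric]
    using P_range \<sigma>'_lt by (simp add: strong_negation_le_iff[OF N])
qed

theorem theorem3:
  fixes T S :: "real \<Rightarrow> real \<Rightarrow> real" and N :: "real \<Rightarrow> real"
  assumes "uninorm T" and "uninorm S" and "strong_negation N"
  shows "rearrangement_ineq T S \<longleftrightarrow> dual_rearrangement_ineq (dual N S) (dual N T)"
proof -
  have "negation N"
    using \<open>strong_negation N\<close> by (simp add: strong_negation_def)
  note reflect = sorted01_reflect_seq[OF \<open>negation N\<close>] permutes_reflect_index_conj
  note chain_iff = dual_rearrangement_chain_iff_reflected[OF assms]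
  show ?thesis
  proof
    assume "rearrangement_ineq T S"
    then show "dual_rearrangement_ineq (dual N S) (dual N T)"
      unfolding rearrangement_ineq_iff_chain dual_rearrangement_ineq_iff_chain
      by (simp add: chain_iff reflect)
  next
    assume "dual_rearrangement_ineq (dual N S) (dual N T)"
    then have "rearrangement_chain T S n (reflect_seq N n (reflect_seq N n x)) (reflect_seq N n (reflect_seq N n y))
        (reflect_index n \<circ> (reflect_index n \<circ> \<sigma> \<circ> reflect_index n) \<circ> reflect_index n)"
      if "1 \<le> n" and "sorted01 n x" and "sorted01 n y" and "\<sigma> permutes {..<n}" for n x y \<sigma>
      unfolding dual_rearrangement_ineq_iff_chain using that by (simp add: chain_iff[symmetric] reflect)
    then show "rearrangement_ineq T S"
      unfolding rearrangement_ineq_iff_chain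
      by (simp add: reflect_seq_reflect_seq[OF \<open>strong_negation N\<close>] reflect_index_conj_involutive)
  qed
qed

end
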